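(* Let $A$ be a cirquent with a subcirquent $B$, let $B'$ be a cirquent with $\overline{B'}<\overline{B}$, and let $A'$ be the result of replacing an occurrence of $B$ in $A$ by $B'$. Then $\overline{A'}<\overline{A}$.
   Context: Cirquents: $\top$, $\bot$ and literals ($p$ or $\neg p$ for an elementary letter $p$) are cirquents; if $A,B$ are cirquents then so are $A\vee B$, $A\wedge B$, $A\sqcap^cB$ ($c$ a conjunctive cluster) and $A\sqcup^cB$ ($c$ a disjunctive cluster). Tetration: ${}^1a=a$, ${}^{n+1}a=a^{({}^na)}$. The rank $\overline{C}$ of a cirquent $C$: $\overline{C}=1$ if $C$ is $\top$, $\bot$ or a literal; $\overline{A\sqcup^cB}=\overline{A\sqcap^cB}=\overline{A}+\overline{B}$; $\overline{A\wedge B}=5^{\overline{A}+\overline{B}}$; $\overline{A\vee B}={}^{(\overline{A}+\overline{B})}5$. *)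

theory Defs
  imports Main
begin

text \<open>Cirquents over elementary letters 'a, conjunctive clusters 'cc and
disjunctive clusters 'dc.\<close>
datatype ('a, 'cc, 'dc) cirquent =
    CTop
  | CBot
  | CPos 'a
  | CNeg 'a
  | CAnd "('a, 'cc, 'dc) cirquent" "('a, 'cc, 'dc) cirquent"
  | COr "('a, 'cc, 'dc) cirquent" "('a, 'cc, 'dc) cirquent"
  | CChoiceAnd "('a, 'cc, 'dc) cirquent" 'cc "('a, 'cc, 'dc) cirquent"
  | CChoiceOr "('a, 'cc, 'dc) cirquent" 'dc "('a, 'cc, 'dc) cirquent"

text \<open>Tetration: tet a 1 = a, tet a (n+1) = a ^ (tet a n); the value at 0 is a
convention (1) and is never used by the rank.\<close>
fun tet :: "nat \<Rightarrow> nat \<Rightarrow> nat" where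
  "tet a 0 = 1"
| "tet a (Suc n) = a ^ (tet a n)"

fun rank :: "('a, 'cc, 'dc) cirquent \<Rightarrow> nat" where
  "rank CTop = 1"
| "rank CBot = 1"
| "rank (CPos p) = 1"
| "rank (CNeg p) = 1"
| "rank (CChoiceAnd A c B) = rank A + rank B"
| "rank (CChoiceOr A c B) = rank A + rank B"
| "rank (CAnd A B) = 5 ^ (rank A + rank B)"
| "rank (COr A B) = tet 5 (rank A + rank B)"

text \<open>One-hole contexts: an occurrence of a subcirquent in a cirquent.\<close>
datatype ('a, 'cc, 'dc) ctxt =
    Hole
  | AndL "('a, 'cc, 'dc) ctxt" "('a, 'cc, 'dc) cirquent"
  | AndR "('a, 'cc, 'dc) cirquent" "('a, 'cc, 'dc) ctxt"
  | OrL "('a, 'cc, 'dc) ctxt" "('a, 'cc, 'dc) cirquent"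
  | OrR "('a, 'cc, 'dc) cirquent" "('a, 'cc, 'dc) ctxt"
  | ChAndL "('a, 'cc, 'dc) ctxt" 'cc "('a, 'cc, 'dc) cirquent"
  | ChAndR "('a, 'cc, 'dc) cirquent" 'cc "('a, 'cc, 'dc) ctxt"
  | ChOrL "('a, 'cc, 'dc) ctxt" 'dc "('a, 'cc, 'dc) cirquent"
  | ChOrR "('a, 'cc, 'dc) cirquent" 'dc "('a, 'cc, 'dc) ctxt"

fun fill :: "('a, 'cc, 'dc) ctxt \<Rightarrow> ('a, 'cc, 'dc) cirquent \<Rightarrow> ('a, 'cc, 'dc) cirquent" where
  "fill Hole X = X"
| "fill (AndL C B) X = CAnd (fill C X) B"
| "fill (AndR A C) X = CAnd A (fill C X)"
| "fill (OrL C B) X = COr (fill C X) B"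
| "fill (OrR A C) X = COr A (fill C X)"
| "fill (ChAndL C c B) X = CChoiceAnd (fill C X) c B"
| "fill (ChAndR A c C) X = CChoiceAnd A c (fill C X)"
| "fill (ChOrL C d B) X = CChoiceOr (fill C X) d B"
| "fill (ChOrR A d C) X = CChoiceOr A d (fill C X)"

end

theory Submission
  imports Defs
begin

(* Every connective's rank is strictly increasing in each argument rank: sums for
   the choice connectives, 5 ^ _ for the parallel conjunction and tetration for the
   parallel disjunction. Strict monotonicity is therefore inherited along the path
   from the root to the replaced occurrence. *)

lemma tet_less_tet_Suc:
  assumes "2 \<le> a"
  shows "tet a n < tet a (Suc n)"
proof (induction n)
  case 0
  show ?case using assms by simp
next
  case (Suc n)
  then show ?case
    using assms by (simp del: tet.simps(2) add: tet.simps(2)[of a "Suc n"] tet.simps(2)[of a n])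
qed

lemma strict_mono_tet:
  assumes "2 \<le> a"
  shows "strict_mono (tet a)"
  using tet_less_tet_Suc[OF assms] by (simp add: strict_mono_Suc_iff)

lemma rank_fill_strict_mono:
  "rank X < rank Y \<Longrightarrow> rank (fill C X) < rank (fill C Y)"
  by (induction C) (auto intro: strict_monoD[OF strict_mono_tet])

theorem lemma7p2:
  fixes A B B' :: "('a, 'cc, 'dc) cirquent" and C :: "('a, 'cc, 'dc) ctxt"
  assumes "A = fill C B"
    and "rank B' < rank B"
  shows "rank (fill C B') < rank A"
  using rank_fill_strict_mono[OF assms(2)] assms(1) by simp

end
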